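(* Let $L$ be a finite graded lattice of rank $n$ with an $S_n$ EL-labeling, and let $\mathfrak m$ be a maximal chain of $L$. Then distinct elements of $\mathcal{M}_{\mathfrak m}$ have distinct label permutations, and the set $\{\omega_{\mathfrak m'}:\mathfrak m'\in\mathcal{M}_{\mathfrak m}\}$ is exactly the set of permutations $\omega$ of $[n]$ with $\omega\le_R\omega_{\mathfrak m}$, each occurring for exactly one $\mathfrak m'\in\mathcal{M}_{\mathfrak m}$.
   Context: An $S_n$ EL-labeling of a finite graded poset with $\hat0,\hat1$ is an edge-labeling of covering pairs such that each interval has exactly one maximal chain with weakly increasing labels (bottom to top), lexicographically smallest among its maximal chains, and labels along each maximal chain $\mathfrak m$ form a permutation $\omega_{\mathfrak m}$ of $[n]$. For $i\in[n-1]$, $U_i(\mathfrak m)$ is the unique maximal chain agreeing with $\mathfrak m$ except possibly at rank $i$ whose label permutation has no descent at $i$. $\mathcal{M}_{\mathfrak m}$ is the set of all maximal chains $U_{i_1}U_{i_2}\cdots U_{i_r}(\mathfrak m)$ for all finite sequences $i_1,\dots,i_r$ in $[n-1]$ (including the empty one). For a permutation $v$ of $[n]$, $\mathrm{INV}(v)=\{(v(j),v(i)): i<j,\ v(i)>v(j)\}$; the (right) weak order is $v\le_R w$ iff $\mathrm{INV}(v)\subseteq\mathrm{INV}(w)$ (equivalently $v$ is obtained from $w$ by successively right-multiplying by adjacent transpositions $s_i$ each decreasing the number of inversions by one). *)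

theory Defs
  imports "HOL-Combinatorics.Permutations"
begin

text \<open>Posets are finite lattices given as a type of class finite and lattice.
Chains are lists of elements, bottom to top.\<close>

definition covers :: "'a::order \<Rightarrow> 'a \<Rightarrow> bool" where
  "covers x y \<longleftrightarrow> x < y \<and> \<not> (\<exists>z. x < z \<and> z < y)"

definition sat_chain :: "'a::order \<Rightarrow> 'a \<Rightarrow> 'a list \<Rightarrow> bool" where
  "sat_chain x y c \<longleftrightarrow> c \<noteq> [] \<and> hd c = x \<and> last c = y \<and>
     (\<forall>k. Suc k < length c \<longrightarrow> covers (c ! k) (c ! Suc k))"

definition max_chain :: "'a::order list \<Rightarrow> bool" where
  "max_chain c \<longleftrightarrow> c \<noteq> [] \<and> (\<forall>z. hd c \<le> z) \<and> (\<forall>z. z \<le> last c) \<and>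
     sat_chain (hd c) (last c) c"

definition graded_rank :: "'a::order itself \<Rightarrow> nat \<Rightarrow> bool" where
  "graded_rank _ n \<longleftrightarrow> (\<forall>c::'a list. max_chain c \<longrightarrow> length c = Suc n)"

definition labels :: "('a \<Rightarrow> 'a \<Rightarrow> nat) \<Rightarrow> 'a list \<Rightarrow> nat list" where
  "labels lam c = map (\<lambda>k. lam (c ! k) (c ! Suc k)) [0..<length c - 1]"

definition EL_labeling :: "('a::order \<Rightarrow> 'a \<Rightarrow> nat) \<Rightarrow> bool" where
  "EL_labeling lam \<longleftrightarrow>
     (\<forall>x y. x \<le> y \<longrightarrow>
        (\<exists>!c. sat_chain x y c \<and> sorted (labels lam c)) \<and>
        (\<forall>c c'. sat_chain x y c \<and> sorted (labels lam c) \<and> sat_chain x y c' \<and> c' \<noteq> c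
           \<longrightarrow> (labels lam c, labels lam c') \<in> lexord {(a, b). a < b}))"

definition Sn_EL_labeling :: "nat \<Rightarrow> ('a::order \<Rightarrow> 'a \<Rightarrow> nat) \<Rightarrow> bool" where
  "Sn_EL_labeling n lam \<longleftrightarrow> EL_labeling lam \<and>
     (\<forall>c. max_chain c \<longrightarrow> distinct (labels lam c) \<and> set (labels lam c) = {1..n})"

definition label_perm :: "nat \<Rightarrow> ('a \<Rightarrow> 'a \<Rightarrow> nat) \<Rightarrow> 'a list \<Rightarrow> nat \<Rightarrow> nat" where
  "label_perm n lam c j = (if j \<in> {1..n} then labels lam c ! (j - 1) else j)"

definition U_op :: "nat \<Rightarrow> ('a::order \<Rightarrow> 'a \<Rightarrow> nat) \<Rightarrow> nat \<Rightarrow> 'a list \<Rightarrow> 'a list" where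
  "U_op n lam i c = (THE c'. max_chain c' \<and> length c' = length c \<and>
       (\<forall>j < length c. j \<noteq> i \<longrightarrow> c' ! j = c ! j) \<and>
       \<not> (label_perm n lam c' i > label_perm n lam c' (Suc i)))"

inductive_set M_set :: "nat \<Rightarrow> ('a::order \<Rightarrow> 'a \<Rightarrow> nat) \<Rightarrow> 'a list \<Rightarrow> 'a list set"
  for n lam c where
  base: "c \<in> M_set n lam c"
| step: "c' \<in> M_set n lam c \<Longrightarrow> i \<in> {1..n-1} \<Longrightarrow> U_op n lam i c' \<in> M_set n lam c"

definition INV :: "nat \<Rightarrow> (nat \<Rightarrow> nat) \<Rightarrow> (nat \<times> nat) set" where
  "INV n v = {(v j, v i) | i j. i \<in> {1..n} \<and> j \<in> {1..n} \<and> i < j \<and> v i > v j}"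

definition weak_le :: "nat \<Rightarrow> (nat \<Rightarrow> nat) \<Rightarrow> (nat \<Rightarrow> nat) \<Rightarrow> bool" where
  "weak_le n v w \<longleftrightarrow> INV n v \<subseteq> INV n w"

end

theory Submission
  imports Defs
begin

text \<open>At a descent i of the label permutation w of a maximal chain, U_i replaces the element of
  rank i by the unique element making the two labels there increase; this turns w into w s_i and
  removes exactly one inversion, while U_i fixes chains without a descent at i. Hence every chain
  in M_m has label permutation below w in the weak order, and conversely every v below w is
  reached by repeatedly resolving a descent of w whose inversion v lacks. Injectivity follows by
  induction on the number of inversions, in the manner of the diamond lemma: two different first
  moves U_i and U_j can be joined again, by commuting them when i and j are not adjacent, and for
  j = i + 1 because U_i U_j U_i m and U_j U_i U_j m are both the chain with increasing labels on
  the interval of rank 3 around positions i and j.\<close>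

section \<open>Inversion sets and the weak order\<close>

abbreviation adj_swap :: "nat \<Rightarrow> nat \<Rightarrow> nat" where
  "adj_swap i \<equiv> Transposition.transpose i (Suc i)"

lemma INV_permutes_iff:
  assumes w: "w permutes {1..n}"
  shows "(x, y) \<in> INV n w \<longleftrightarrow> x \<in> {1..n} \<and> y \<in> {1..n} \<and> x < y \<and> inv w y < inv w x"
proof
  assume "(x, y) \<in> INV n w"
  then obtain i j where ij: "x = w j" "y = w i" "i \<in> {1..n}" "j \<in> {1..n}" "i < j" "w j < w i"
    unfolding INV_def by blast
  moreover have "w i \<in> {1..n}" "w j \<in> {1..n}"
    using ij(3,4) permutes_in_image[OF w] by blast+
  ultimately show "x \<in> {1..n} \<and> y \<in> {1..n} \<and> x < y \<and> inv w y < inv w x"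
    using permutes_inverses(2)[OF w] by simp
next
  assume xy: "x \<in> {1..n} \<and> y \<in> {1..n} \<and> x < y \<and> inv w y < inv w x"
  have "inv w y \<in> {1..n}" "inv w x \<in> {1..n}"
    using xy permutes_in_image[OF permutes_inv[OF w]] by auto
  moreover have "x = w (inv w x)" "y = w (inv w y)"
    using permutes_inverses(1)[OF w] by auto
  ultimately show "(x, y) \<in> INV n w"
    unfolding INV_def using xy by fastforce
qed

lemma finite_INV: "finite (INV n w)"
proof -
  have "INV n w \<subseteq> w ` {1..n} \<times> w ` {1..n}"
    unfolding INV_def by auto
  then show ?thesis
    by (rule finite_subset) auto
qed

lemma not_in_INV_iff:
  assumes w: "w permutes {1..n}" and "x \<in> {1..n}" "y \<in> {1..n}" "x < y"
  shows "(x, y) \<notin> INV n w \<longleftrightarrow> inv w x < inv w y"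
proof -
  have "inv w x \<noteq> inv w y"
    using assms permutes_inj[OF permutes_inv[OF w]] by (metis inj_eq less_irrefl)
  then show ?thesis
    using INV_permutes_iff[OF w] assms by auto
qed

lemma descent_in_INV: "i \<in> {1..n-1} \<Longrightarrow> w (Suc i) < w i \<Longrightarrow> (w (Suc i), w i) \<in> INV n w"
  unfolding INV_def by force

lemma adj_swap_less_iff: "{p, q} \<noteq> {i, Suc i} \<Longrightarrow> adj_swap i p < adj_swap i q \<longleftrightarrow> p < q"
  by (auto simp: Transposition.transpose_def doubleton_eq_iff)

lemma INV_comp_adj_swap:
  assumes w: "w permutes {1..n}" and i: "i \<in> {1..n-1}" and descent: "w (Suc i) < w i"
  shows "INV n (w \<circ> adj_swap i) = INV n w - {(w (Suc i), w i)}"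
proof (intro set_eqI, unfold split_paired_all)
  fix x y
  have ws: "w \<circ> adj_swap i permutes {1..n}"
    using i by (intro permutes_compose[OF _ w] permutes_swap_id) auto
  have inv_ws: "inv (w \<circ> adj_swap i) = adj_swap i \<circ> inv w"
    using o_inv_distrib[OF permutes_bij[OF w] bij_transpose] by simp
  show "(x, y) \<in> INV n (w \<circ> adj_swap i) \<longleftrightarrow> (x, y) \<in> INV n w - {(w (Suc i), w i)}"
  proof (cases "x \<in> {1..n} \<and> y \<in> {1..n} \<and> x < y")
    case in_range: True
    define p q where "p = inv w x" and "q = inv w y"
    have xy: "x = w p" "y = w q"
      unfolding p_def q_def using permutes_inverses(1)[OF w] by auto
    have pair_iff: "(x, y) = (w (Suc i), w i) \<longleftrightarrow> p = Suc i \<and> q = i"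
      using xy permutes_inj[OF w] by (auto dest: injD)
    have "(x, y) \<in> INV n (w \<circ> adj_swap i) \<longleftrightarrow> adj_swap i q < adj_swap i p"
      using in_range INV_permutes_iff[OF ws] inv_ws p_def q_def by simp
    also have "\<dots> \<longleftrightarrow> q < p \<and> \<not> (p = Suc i \<and> q = i)"
    proof (cases "{q, p} = {i, Suc i}")
      case True
      then have "p = Suc i \<and> q = i"
        using xy in_range descent by (auto simp: doubleton_eq_iff)
      then show ?thesis by simp
    next
      case False
      then show ?thesis
        using adj_swap_less_iff[OF False] by (auto simp: doubleton_eq_iff)
    qed
    finally show ?thesis
      using in_range INV_permutes_iff[OF w] p_def q_def pair_iff by auto
  next
    case False
    then show ?thesis
      using INV_permutes_iff[OF ws] INV_permutes_iff[OF w] by blast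
  qed
qed

lemma card_le_permutes:
  assumes f: "f permutes {1..n}" and a: "a \<in> {1..n}"
  shows "card {b \<in> {1..n}. f b \<le> f a} = f a"
proof -
  have "f ` {b \<in> {1..n}. f b \<le> f a} = {1..f a}"
  proof (intro equalityI subsetI)
    fix k assume "k \<in> {1..f a}"
    moreover have "f a \<in> {1..n}"
      using permutes_in_image[OF f] a by simp
    ultimately have "k \<in> f ` {1..n}"
      using permutes_image[OF f] by simp
    then show "k \<in> f ` {b \<in> {1..n}. f b \<le> f a}"
      using \<open>k \<in> {1..f a}\<close> by auto
  qed (use permutes_in_image[OF f] in auto)
  moreover have "inj_on f {b \<in> {1..n}. f b \<le> f a}"
    using permutes_inj[OF f] inj_on_subset by blast
  ultimately show ?thesis
    by (metis card_atLeastAtMost card_image diff_Suc_1)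
qed

text \<open>The position of a value a in a permutation v is the number of values that do not
  come after a, which INV n v records.\<close>
lemma INV_inject:
  assumes v: "v permutes {1..n}" and w: "w permutes {1..n}" and eq: "INV n v = INV n w"
  shows "v = w"
proof -
  have order_eq: "inv v b \<le> inv v a \<longleftrightarrow> inv w b \<le> inv w a"
    if "a \<in> {1..n}" "b \<in> {1..n}" for a b
  proof (cases a b rule: linorder_cases)
    case less
    then show ?thesis
      using not_in_INV_iff[OF v] not_in_INV_iff[OF w] INV_permutes_iff[OF v] INV_permutes_iff[OF w]
        that eq by (metis less_le_not_le nle_le)
  next
    case greater
    then show ?thesis
      using not_in_INV_iff[OF v] not_in_INV_iff[OF w] INV_permutes_iff[OF v] INV_permutes_iff[OF w]
        that eq by (metis less_le_not_le nle_le)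
  qed simp
  have "inv v a = inv w a" for a
  proof (cases "a \<in> {1..n}")
    case True
    have "{b \<in> {1..n}. inv v b \<le> inv v a} = {b \<in> {1..n}. inv w b \<le> inv w a}"
      using order_eq True by auto
    then show ?thesis
      using card_le_permutes[OF permutes_inv[OF v] True] card_le_permutes[OF permutes_inv[OF w] True]
      by simp
  next
    case False
    then show ?thesis
      using permutes_not_in[OF permutes_inv[OF v]] permutes_not_in[OF permutes_inv[OF w]] by simp
  qed
  then show ?thesis
    using permutes_bij[OF v] permutes_bij[OF w] by (metis ext inv_inv_eq)
qed

lemma permutes_eq_comp_adj_swap:
  assumes w: "w permutes {1..n}" and w': "w' permutes {1..n}" and i: "i \<in> {1..n-1}"
    and same: "\<And>j. j \<noteq> i \<Longrightarrow> j \<noteq> Suc i \<Longrightarrow> w' j = w j"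
    and descent: "w (Suc i) < w i" and no_descent: "w' i \<le> w' (Suc i)"
  shows "w' = w \<circ> adj_swap i"
proof -
  have swapped_values: "w' j = w i \<or> w' j = w (Suc i)" if j: "j = i \<or> j = Suc i" for j
  proof -
    have "j \<in> {1..n}"
      using i j by auto
    then have "w' j \<in> w ` {1..n}"
      unfolding permutes_image[OF w] using permutes_in_image[OF w'] by simp
    then obtain k where k: "k \<in> {1..n}" "w' j = w k"
      by blast
    have "k = i \<or> k = Suc i"
    proof (rule ccontr)
      assume k_out: "\<not> (k = i \<or> k = Suc i)"
      then have "w' k = w' j"
        using same k by simp
      then have "k = j"
        using permutes_inj[OF w'] by (simp add: inj_eq)
      then show False
        using k_out j by simp
    qed
    then show ?thesis
      using k by blast
  qed
  have "w' i \<noteq> w' (Suc i)"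
    using permutes_inj[OF w'] by (simp add: inj_eq)
  then have swapped: "w' i = w (Suc i)" "w' (Suc i) = w i"
    using swapped_values[OF disjI1[OF refl]] swapped_values[OF disjI2[OF refl]]
    by (elim disjE; use descent no_descent in simp)+
  show ?thesis
  proof
    fix x
    show "w' x = (w \<circ> adj_swap i) x"
      using swapped same[of x] by (cases "x = i \<or> x = Suc i") auto
  qed
qed

text \<open>A pair of positions p < q inverted by w but not by v, with q - p minimal, is adjacent:
  otherwise the position p + 1 would produce an inverted pair closer together.\<close>
lemma exists_descent_not_in_INV:
  assumes v: "v permutes {1..n}" and w: "w permutes {1..n}" and le: "weak_le n v w"
    and ne: "v \<noteq> w"
  shows "\<exists>i\<in>{1..n-1}. w (Suc i) < w i \<and> (w (Suc i), w i) \<notin> INV n v"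
proof -
  have w_range: "k \<in> {1..n} \<Longrightarrow> w k \<in> {1..n}" for k
    using permutes_in_image[OF w] by auto
  define bad where "bad p q \<longleftrightarrow>
    p \<in> {1..n} \<and> q \<in> {1..n} \<and> p < q \<and> w q < w p \<and> (w q, w p) \<notin> INV n v" for p q
  have "INV n v \<subset> INV n w"
    using le ne INV_inject[OF v w] unfolding weak_le_def by blast
  then obtain x y where "(x, y) \<in> INV n w" "(x, y) \<notin> INV n v"
    by auto
  then have "bad (inv w y) (inv w x)"
    using INV_permutes_iff[OF w] permutes_inverses(1)[OF w]
      permutes_in_image[OF permutes_inv[OF w]]
    unfolding bad_def by auto
  then obtain g where "\<exists>p q. bad p q \<and> q - p = g"
    and g_min: "\<And>g'. g' < g \<Longrightarrow> \<not> (\<exists>p q. bad p q \<and> q - p = g')"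
    using exists_least_iff[of "\<lambda>g. \<exists>p q. bad p q \<and> q - p = g"] by blast
  then obtain p q where pq: "bad p q" "q - p = g" by blast
  have ordered_by_v: "inv v (w a) < inv v (w b)"
    if ab: "a \<in> {1..n}" "b \<in> {1..n}" "a < b" "b - a < g" for a b
  proof (cases "w a < w b")
    case True
    then have "(w a, w b) \<notin> INV n w"
      using INV_permutes_iff[OF w] permutes_inverses(2)[OF w] ab by auto
    then have "(w a, w b) \<notin> INV n v"
      using le unfolding weak_le_def by blast
    then show ?thesis
      using not_in_INV_iff[OF v] True w_range ab by auto
  next
    case False
    then have "w b < w a"
      using permutes_inj[OF w] ab by (metis injD linorder_neqE_nat less_irrefl)
    then have "(w b, w a) \<in> INV n v"
      using g_min[OF ab(4)] ab unfolding bad_def by blast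
    then show ?thesis
      using INV_permutes_iff[OF v] by auto
  qed
  show ?thesis
  proof (cases "q = Suc p")
    case True
    then show ?thesis
      using pq unfolding bad_def by (intro bexI[of _ p]) auto
  next
    case False
    then have "Suc p < q"
      using pq unfolding bad_def by auto
    then have "inv v (w p) < inv v (w (Suc p))" "inv v (w (Suc p)) < inv v (w q)"
      using ordered_by_v[of p "Suc p"] ordered_by_v[of "Suc p" q] pq unfolding bad_def by auto
    moreover have "inv v (w q) < inv v (w p)"
      using pq not_in_INV_iff[OF v] w_range unfolding bad_def by auto
    ultimately show ?thesis by simp
  qed
qed

lemma not_in_INV_trans:
  assumes v: "v permutes {1..n}" and "a \<in> {1..n}" "b \<in> {1..n}" "c \<in> {1..n}" "a < b" "b < c"
    and "(a, b) \<notin> INV n v" "(b, c) \<notin> INV n v"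
  shows "(a, c) \<notin> INV n v"
  using assms not_in_INV_iff[OF v] by (meson less_trans)

lemma INV_comp_adj_swap_braid:
  assumes w: "w permutes {1..n}" and i: "i \<in> {1..n-1}" "Suc i \<in> {1..n-1}"
    and descents: "w (Suc (Suc i)) < w (Suc i)" "w (Suc i) < w i"
  shows "INV n (w \<circ> adj_swap i \<circ> adj_swap (Suc i) \<circ> adj_swap i) =
    INV n w - {(w (Suc i), w i), (w (Suc (Suc i)), w i), (w (Suc (Suc i)), w (Suc i))}"
proof -
  have swap_permutes: "adj_swap k permutes {1..n}" if "k \<in> {1..n-1}" for k
    using that by (intro permutes_swap_id) auto
  let ?w1 = "w \<circ> adj_swap i" and ?w2 = "w \<circ> adj_swap i \<circ> adj_swap (Suc i)"
  have w1: "?w1 permutes {1..n}" and w2: "?w2 permutes {1..n}"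
    using i w swap_permutes by (auto intro!: permutes_compose)
  have "INV n ?w1 = INV n w - {(w (Suc i), w i)}"
    using INV_comp_adj_swap[OF w i(1)] descents by simp
  moreover have "INV n ?w2 = INV n ?w1 - {(w (Suc (Suc i)), w i)}"
    using INV_comp_adj_swap[OF w1 i(2)] descents by (simp add: Transposition.transpose_def)
  moreover have "INV n (?w2 \<circ> adj_swap i) = INV n ?w2 - {(w (Suc (Suc i)), w (Suc i))}"
    using INV_comp_adj_swap[OF w2 i(1)] descents by (simp add: Transposition.transpose_def)
  ultimately show ?thesis
    by (auto simp: comp_assoc)
qed

section \<open>Saturated and maximal chains\<close>

lemma sat_chain_singleton_iff: "sat_chain a b [x] \<longleftrightarrow> x = a \<and> x = b"
  unfolding sat_chain_def by auto

lemma sat_chain_Cons_Cons_iff: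
  "sat_chain a b (x # y # zs) \<longleftrightarrow> x = a \<and> covers x y \<and> sat_chain y b (y # zs)"
  unfolding sat_chain_def by (auto simp: nth_Cons split: nat.splits)

lemma sat_chain_append_tl:
  "sat_chain a b d1 \<Longrightarrow> sat_chain b e d2 \<Longrightarrow> sat_chain a e (d1 @ tl d2)"
proof (induction d1 arbitrary: a rule: induct_list012)
  case 1
  then show ?case by (simp add: sat_chain_def)
next
  case (2 x)
  then show ?case
    by (cases d2 rule: remdups_adj.cases)
      (auto simp: sat_chain_singleton_iff sat_chain_Cons_Cons_iff sat_chain_def)
next
  case (3 x y zs)
  then show ?case
    by (auto simp: sat_chain_Cons_Cons_iff)
qed

lemma sat_chain_take_drop:
  assumes c: "sat_chain a b c" and jk: "j \<le> k" "k < length c"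
  shows "sat_chain (c ! j) (c ! k) (take (Suc k - j) (drop j c))"
proof -
  have "length c - j > Suc k - j \<or> k = length c - 1"
    using jk by linarith
  then show ?thesis
    using assms unfolding sat_chain_def by (auto simp: hd_conv_nth last_conv_nth min_def)
qed

lemma length_labels: "length (labels lam c) = length c - 1"
  unfolding labels_def by simp

lemma nth_labels: "k < length c - 1 \<Longrightarrow> labels lam c ! k = lam (c ! k) (c ! Suc k)"
  unfolding labels_def by simp

locale graded_Sn_EL =
  fixes n :: nat and lam :: "'a::order \<Rightarrow> 'a \<Rightarrow> nat"
  assumes graded: "graded_rank TYPE('a) n" and Sn_EL: "Sn_EL_labeling n lam"
begin

abbreviation \<omega> :: "'a list \<Rightarrow> nat \<Rightarrow> nat" where "\<omega> c \<equiv> label_perm n lam c"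
abbreviation U :: "nat \<Rightarrow> 'a list \<Rightarrow> 'a list" where "U i c \<equiv> U_op n lam i c"
abbreviation M :: "'a list \<Rightarrow> 'a list set" where "M c \<equiv> M_set n lam c"

lemma length_max_chain: "max_chain (c :: 'a list) \<Longrightarrow> length c = Suc n"
  using graded unfolding graded_rank_def by blast

lemma max_chain_iff_nth:
  "max_chain (c :: 'a list) \<longleftrightarrow> length c = Suc n \<and> (\<forall>z. c ! 0 \<le> z) \<and> (\<forall>z. z \<le> c ! n) \<and>
     (\<forall>k<n. covers (c ! k) (c ! Suc k))"
proof (cases "length c = Suc n")
  case True
  then have "c \<noteq> []" by auto
  with True show ?thesis
    unfolding max_chain_def sat_chain_def by (auto simp: hd_conv_nth last_conv_nth)
next
  case False
  then show ?thesis
    using length_max_chain by blast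
qed

lemma max_chain_covers: "max_chain (c :: 'a list) \<Longrightarrow> k < n \<Longrightarrow> covers (c ! k) (c ! Suc k)"
  unfolding max_chain_iff_nth by blast

lemma max_chain_mono:
  assumes c: "max_chain (c :: 'a list)" and "a \<le> b" "b \<le> n"
  shows "c ! a \<le> c ! b"
  using assms(2,3)
proof (induction b rule: dec_induct)
  case (step b)
  then show ?case
    using max_chain_covers[OF c, of b] unfolding covers_def by force
qed simp

lemma label_perm_nth: "max_chain c \<Longrightarrow> k \<in> {1..n} \<Longrightarrow> \<omega> c k = lam (c ! (k - 1)) (c ! k)"
  unfolding label_perm_def using nth_labels[of "k - 1" c lam] length_max_chain[of c] by auto

lemma label_perm_permutes:
  assumes c: "max_chain c"
  shows "\<omega> c permutes {1..n}"
proof (rule bij_imp_permutes)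
  have "distinct (labels lam c)" "set (labels lam c) = {1..n}"
    using Sn_EL c unfolding Sn_EL_labeling_def by auto
  moreover have "length (labels lam c) = n"
    using length_max_chain[OF c] length_labels[of lam c] by simp
  ultimately have "bij_betw ((!) (labels lam c)) {..<n} {1..n}"
    by (intro bij_betw_nth) auto
  moreover have "bij_betw (\<lambda>k. k - 1) {1..n} {..<n}"
    by (rule bij_betw_byWitness[where f' = Suc]) auto
  ultimately have "bij_betw ((!) (labels lam c) \<circ> (\<lambda>k. k - 1)) {1..n} {1..n}"
    by (rule bij_betw_trans[rotated])
  then show "bij_betw (\<omega> c) {1..n} {1..n}"
    by (rule bij_betw_cong[THEN iffD1, rotated]) (simp add: label_perm_def)
qed (auto simp: label_perm_def)

lemma max_chain_list_update:
  assumes c: "max_chain (c :: 'a list)" and i: "i \<in> {1..n-1}"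
    and z: "covers (c ! (i - 1)) z" "covers z (c ! Suc i)"
  shows "max_chain (c[i := z])"
  unfolding max_chain_iff_nth
proof (intro conjI allI impI)
  have i': "i \<noteq> 0" "i \<noteq> n" "i - 1 < n"
    using i by auto
  show "length (c[i := z]) = Suc n" "c[i := z] ! 0 \<le> x" "x \<le> c[i := z] ! n" for x
    using c i' unfolding max_chain_iff_nth by auto
  show "covers (c[i := z] ! k) (c[i := z] ! Suc k)" if "k < n" for k
    using c i' z that length_max_chain[OF c] max_chain_covers[OF c that]
    by (cases "Suc k = i"; cases "k = i") auto
qed

lemma sat_chain_max_chain:
  assumes c: "max_chain (c :: 'a list)"
  shows "sat_chain (c ! 0) (c ! n) c"
  using c length_max_chain[OF c] unfolding max_chain_def by (auto simp: hd_conv_nth last_conv_nth)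

text \<open>Gradedness forces every saturated chain between two elements of a maximal chain to
  have the same length as the piece of the maximal chain between them: otherwise splicing it
  in would produce a maximal chain of the wrong length.\<close>
lemma length_sat_chain_between:
  assumes c: "max_chain (c :: 'a list)" and jk: "j \<le> k" "k \<le> n"
    and d: "sat_chain (c ! j) (c ! k) d"
  shows "length d = Suc (k - j)"
proof -
  have L: "length c = Suc n"
    using length_max_chain[OF c] .
  have below: "sat_chain (c ! 0) (c ! j) (take (Suc j) c)"
    using sat_chain_take_drop[OF sat_chain_max_chain[OF c], of 0 j] jk L by simp
  have above: "sat_chain (c ! k) (c ! n) (drop k c)"
    using sat_chain_take_drop[OF sat_chain_max_chain[OF c], of k n] jk L by simp
  let ?s = "(take (Suc j) c @ tl d) @ tl (drop k c)"
  have "sat_chain (c ! 0) (c ! n) ?s"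
    using sat_chain_append_tl[OF sat_chain_append_tl[OF below d] above] .
  then have "max_chain ?s"
    using max_chain_iff_nth[THEN iffD1, OF c] unfolding max_chain_def sat_chain_def by metis
  then have "length ?s = Suc n"
    by (rule length_max_chain)
  moreover have "d \<noteq> []"
    using d unfolding sat_chain_def by simp
  ultimately show ?thesis
    using jk L by (cases d) auto
qed

lemma ex1_sorted_sat_chain: "x \<le> y \<Longrightarrow> \<exists>!d. sat_chain x y d \<and> sorted (labels lam d)"
  using Sn_EL unfolding Sn_EL_labeling_def EL_labeling_def by blast

lemma sorted_window_nth_eq:
  assumes c1: "max_chain c1" and c2: "max_chain c2" and ab: "a \<le> b" "b \<le> n"
    and ends: "c1 ! a = c2 ! a" "c1 ! b = c2 ! b"
    and sorted1: "\<And>k. a < k \<Longrightarrow> k < b \<Longrightarrow> \<omega> c1 k \<le> \<omega> c1 (Suc k)"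
    and sorted2: "\<And>k. a < k \<Longrightarrow> k < b \<Longrightarrow> \<omega> c2 k \<le> \<omega> c2 (Suc k)"
    and k: "a \<le> k" "k \<le> b"
  shows "c1 ! k = c2 ! k"
proof -
  define window :: "'a list \<Rightarrow> 'a list" where "window c = take (Suc b - a) (drop a c)" for c
  have window: "sat_chain (c ! a) (c ! b) (window c) \<and> sorted (labels lam (window c))"
    if c: "max_chain c" and sorted: "\<And>k. a < k \<Longrightarrow> k < b \<Longrightarrow> \<omega> c k \<le> \<omega> c (Suc k)" for c
  proof
    have L: "length c = Suc n"
      using length_max_chain[OF c] .
    show "sat_chain (c ! a) (c ! b) (window c)"
      unfolding window_def using sat_chain_take_drop[OF sat_chain_max_chain[OF c]] ab L by simp
    have length: "length (labels lam (window c)) = b - a"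
      using ab L by (simp add: window_def length_labels)
    have nth: "labels lam (window c) ! t = \<omega> c (Suc (a + t))" if "t < b - a" for t
      using that ab L label_perm_nth[OF c, of "Suc (a + t)"]
      by (simp add: window_def nth_labels)
    show "sorted (labels lam (window c))"
      unfolding sorted_iff_nth_Suc length using nth sorted by simp
  qed
  have "window c1 = window c2"
    using ex1_sorted_sat_chain[OF max_chain_mono[OF c1 ab]]
      window[OF c1 sorted1] window[OF c2 sorted2] ends by metis
  then have "window c1 ! (k - a) = window c2 ! (k - a)"
    by simp
  then show ?thesis
    using k ab length_max_chain[OF c1] length_max_chain[OF c2] by (simp add: window_def)
qed

section \<open>The operators U_i\<close>

lemma obtain_sorted_midpoint:
  assumes c: "max_chain c" and i: "i \<in> {1..n-1}"
  obtains z where "covers (c ! (i - 1)) z" "covers z (c ! Suc i)"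
    "lam (c ! (i - 1)) z \<le> lam z (c ! Suc i)"
proof -
  have "c ! (i - 1) \<le> c ! Suc i"
    using i by (intro max_chain_mono[OF c]) auto
  then obtain d where d: "sat_chain (c ! (i - 1)) (c ! Suc i) d" "sorted (labels lam d)"
    using ex1_sorted_sat_chain by blast
  have "length d = 3"
    using length_sat_chain_between[OF c _ _ d(1)] i by auto
  then obtain x z y where "d = [x, z, y]"
    by (auto simp: length_Suc_conv numeral_eq_Suc)
  moreover have "labels lam [x, z, y] = [lam x z, lam z y]"
    by (simp add: labels_def numeral_eq_Suc)
  ultimately show ?thesis
    using d that by (auto simp: sat_chain_Cons_Cons_iff sat_chain_singleton_iff)
qed

lemma U_op_ex1:
  assumes c: "max_chain c" and i: "i \<in> {1..n-1}"
  shows "\<exists>!c'. max_chain c' \<and> length c' = length c \<and> (\<forall>j<length c. j \<noteq> i \<longrightarrow> c' ! j = c ! j) \<and>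
    \<not> \<omega> c' (Suc i) < \<omega> c' i"
proof (rule ex_ex1I)
  obtain z where z: "covers (c ! (i - 1)) z" "covers z (c ! Suc i)"
    "lam (c ! (i - 1)) z \<le> lam z (c ! Suc i)"
    using obtain_sorted_midpoint[OF c i] .
  have "max_chain (c[i := z])"
    using max_chain_list_update[OF c i z(1,2)] .
  moreover have "\<omega> (c[i := z]) i = lam (c ! (i - 1)) z" "\<omega> (c[i := z]) (Suc i) = lam z (c ! Suc i)"
    using label_perm_nth[OF calculation, of i] label_perm_nth[OF calculation, of "Suc i"] i
      length_max_chain[OF c] by auto
  ultimately show "\<exists>c'. max_chain c' \<and> length c' = length c \<and>
    (\<forall>j<length c. j \<noteq> i \<longrightarrow> c' ! j = c ! j) \<and> \<not> \<omega> c' (Suc i) < \<omega> c' i"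
    using z(3) by (intro exI[of _ "c[i := z]"]) auto
next
  fix c1 c2
  assume c1: "max_chain c1 \<and> length c1 = length c \<and> (\<forall>j<length c. j \<noteq> i \<longrightarrow> c1 ! j = c ! j) \<and>
      \<not> \<omega> c1 (Suc i) < \<omega> c1 i"
    and c2: "max_chain c2 \<and> length c2 = length c \<and> (\<forall>j<length c. j \<noteq> i \<longrightarrow> c2 ! j = c ! j) \<and>
      \<not> \<omega> c2 (Suc i) < \<omega> c2 i"
  have L: "length c = Suc n"
    using length_max_chain[OF c] .
  have only_i: "k = i" if "i - 1 < k" "k < Suc i" for k
    using that i by auto
  have "c1 ! i = c2 ! i"
    by (rule sorted_window_nth_eq[of c1 c2 "i - 1" "Suc i"])
      (use c1 c2 i L only_i in \<open>auto simp: not_less\<close>)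
  then show "c1 = c2"
    using c1 c2 by (metis nth_equalityI)
qed

lemma U_op_spec:
  assumes "max_chain c" "i \<in> {1..n-1}"
  shows "max_chain (U i c) \<and> length (U i c) = length c \<and>
    (\<forall>j<length c. j \<noteq> i \<longrightarrow> U i c ! j = c ! j) \<and> \<not> \<omega> (U i c) (Suc i) < \<omega> (U i c) i"
  unfolding U_op_def by (rule theI'[OF U_op_ex1[OF assms]])

lemma max_chain_U_op: "max_chain c \<Longrightarrow> i \<in> {1..n-1} \<Longrightarrow> max_chain (U i c)"
  using U_op_spec by blast

lemma nth_U_op: "max_chain c \<Longrightarrow> i \<in> {1..n-1} \<Longrightarrow> j \<noteq> i \<Longrightarrow> j \<le> n \<Longrightarrow> U i c ! j = c ! j"
  using U_op_spec length_max_chain by (metis less_Suc_eq_le)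

lemma U_op_sorted: "max_chain c \<Longrightarrow> i \<in> {1..n-1} \<Longrightarrow> \<omega> (U i c) i \<le> \<omega> (U i c) (Suc i)"
  using U_op_spec by (meson not_less)

lemma U_op_eqI:
  assumes c: "max_chain c" and i: "i \<in> {1..n-1}" and c': "max_chain c'"
    and same: "\<And>j. j \<le> n \<Longrightarrow> j \<noteq> i \<Longrightarrow> c' ! j = c ! j" and sorted: "\<omega> c' i \<le> \<omega> c' (Suc i)"
  shows "U i c = c'"
  unfolding U_op_def
proof (rule the1_equality[OF U_op_ex1[OF c i]])
  show "max_chain c' \<and> length c' = length c \<and> (\<forall>j<length c. j \<noteq> i \<longrightarrow> c' ! j = c ! j) \<and>
    \<not> \<omega> c' (Suc i) < \<omega> c' i"
    using c' same sorted length_max_chain[OF c] length_max_chain[OF c'] by auto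
qed

lemma U_op_id: "max_chain c \<Longrightarrow> i \<in> {1..n-1} \<Longrightarrow> \<omega> c i \<le> \<omega> c (Suc i) \<Longrightarrow> U i c = c"
  by (rule U_op_eqI) auto

lemma label_perm_U_op:
  assumes c: "max_chain c" and i: "i \<in> {1..n-1}" and descent: "\<omega> c (Suc i) < \<omega> c i"
  shows "\<omega> (U i c) = \<omega> c \<circ> adj_swap i"
proof (rule permutes_eq_comp_adj_swap[OF label_perm_permutes[OF c]
      label_perm_permutes[OF max_chain_U_op[OF c i]] i _ descent U_op_sorted[OF c i]])
  fix j assume "j \<noteq> i" "j \<noteq> Suc i"
  then show "\<omega> (U i c) j = \<omega> c j"
    using label_perm_nth[OF c] label_perm_nth[OF max_chain_U_op[OF c i]] nth_U_op[OF c i]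
    by (cases "j \<in> {1..n}") (auto simp: label_perm_def)
qed

lemma INV_U_op:
  assumes c: "max_chain c" and i: "i \<in> {1..n-1}" and descent: "\<omega> c (Suc i) < \<omega> c i"
  shows "INV n (\<omega> (U i c)) = INV n (\<omega> c) - {(\<omega> c (Suc i), \<omega> c i)}"
  using INV_comp_adj_swap[OF label_perm_permutes[OF c] i descent] label_perm_U_op[OF assms] by simp

lemma M_set_trans:
  assumes "c' \<in> M c" "c'' \<in> M c'"
  shows "c'' \<in> M c"
  using assms(2) by induction (auto intro: assms(1) M_set.step)

lemma U_op_in_M_set: "i \<in> {1..n-1} \<Longrightarrow> U i c \<in> M c"
  by (rule M_set.step[OF M_set.base])

lemma M_set_weak_le:
  assumes c: "max_chain c" and c': "c' \<in> M c"
  shows "max_chain c' \<and> weak_le n (\<omega> c') (\<omega> c)"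
  using c'
proof (induction rule: M_set.induct)
  case base
  then show ?case
    using c by (simp add: weak_le_def)
next
  case (step d i)
  then have d: "max_chain d" "INV n (\<omega> d) \<subseteq> INV n (\<omega> c)"
    by (auto simp: weak_le_def)
  show ?case
  proof (cases "\<omega> d (Suc i) < \<omega> d i")
    case True
    then show ?thesis
      using d INV_U_op[OF d(1) step.hyps(2) True] max_chain_U_op[OF d(1) step.hyps(2)]
      by (auto simp: weak_le_def)
  next
    case False
    then show ?thesis
      using d U_op_id[OF d(1) step.hyps(2)] by (simp add: weak_le_def not_less)
  qed
qed

lemma M_set_cases:
  assumes c: "max_chain c" and c': "c' \<in> M c"
  shows "c' = c \<or> (\<exists>i\<in>{1..n-1}. \<omega> c (Suc i) < \<omega> c i \<and> c' \<in> M (U i c))"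
  using c'
proof (induction rule: M_set.induct)
  case (step d j)
  then consider "d = c" | i where "i \<in> {1..n-1}" "\<omega> c (Suc i) < \<omega> c i" "d \<in> M (U i c)"
    by blast
  then show ?case
  proof cases
    case 1
    then show ?thesis
      using U_op_id[OF c step.hyps(2)] step.hyps(2)
      by (cases "\<omega> c (Suc j) < \<omega> c j") (auto intro: M_set.base)
  next
    case 2
    then show ?thesis
      using M_set.step[OF 2(3) step.hyps(2)] by blast
  qed
qed simp

lemma ex_M_set_label_perm:
  "max_chain c \<Longrightarrow> v permutes {1..n} \<Longrightarrow> weak_le n v (\<omega> c) \<Longrightarrow> \<exists>c'\<in>M c. \<omega> c' = v"
proof (induction "card (INV n (\<omega> c))" arbitrary: c rule: less_induct)
  case less
  note c = less.prems(1)
  show ?case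
  proof (cases "v = \<omega> c")
    case True
    then show ?thesis by (auto intro: M_set.base)
  next
    case False
    then obtain i where i: "i \<in> {1..n-1}" "\<omega> c (Suc i) < \<omega> c i"
      and not_inv: "(\<omega> c (Suc i), \<omega> c i) \<notin> INV n v"
      using exists_descent_not_in_INV[OF less.prems(2) label_perm_permutes[OF c] less.prems(3)]
      by blast
    have INV_Ui: "INV n (\<omega> (U i c)) = INV n (\<omega> c) - {(\<omega> c (Suc i), \<omega> c i)}"
      using INV_U_op[OF c i] .
    have "card (INV n (\<omega> (U i c))) < card (INV n (\<omega> c))"
      unfolding INV_Ui by (rule card_Diff1_less[OF finite_INV descent_in_INV[OF i]])
    moreover have "weak_le n v (\<omega> (U i c))"
      using less.prems(3) not_inv INV_Ui by (auto simp: weak_le_def)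
    ultimately obtain c' where "c' \<in> M (U i c)" "\<omega> c' = v"
      using less.hyps max_chain_U_op[OF c i(1)] less.prems(2) by blast
    then show ?thesis
      using M_set_trans[OF U_op_in_M_set[OF i(1)]] by blast
  qed
qed

lemma label_perm_image_M_set:
  assumes m: "max_chain m"
  shows "\<omega> ` M m = {v. v permutes {1..n} \<and> weak_le n v (\<omega> m)}"
proof (intro equalityI subsetI)
  fix v assume "v \<in> \<omega> ` M m"
  then show "v \<in> {v. v permutes {1..n} \<and> weak_le n v (\<omega> m)}"
    using M_set_weak_le[OF m] label_perm_permutes by blast
next
  fix v assume "v \<in> {v. v permutes {1..n} \<and> weak_le n v (\<omega> m)}"
  then show "v \<in> \<omega> ` M m"
    using ex_M_set_label_perm[OF m] by blast
qed

lemma U_op_commute: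
  assumes c: "max_chain c" and i: "i \<in> {1..n-1}" and j: "j \<in> {1..n-1}" and far: "Suc i < j"
  shows "U i (U j c) = U j (U i c)"
proof (rule U_op_eqI[OF max_chain_U_op[OF c j] i])
  let ?r = "U j (U i c)"
  have ci: "max_chain (U i c)" and cj: "max_chain (U j c)"
    using max_chain_U_op c i j by auto
  show r: "max_chain ?r"
    using max_chain_U_op[OF ci j] .
  have r_nth: "?r ! k = c ! k" if "k \<le> n" "k \<noteq> i" "k \<noteq> j" for k
    using nth_U_op[OF ci j] nth_U_op[OF c i] that by simp
  show "?r ! k = U j c ! k" if k: "k \<le> n" "k \<noteq> i" for k
  proof (cases "k = j")
    case True
    have only_j: "k' = j" if "j - 1 < k'" "k' < Suc j" for k'
      using that j by auto
    have "?r ! j = U j c ! j"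
      by (rule sorted_window_nth_eq[OF r cj, of "j - 1" "Suc j"])
        (use j far r_nth nth_U_op[OF c j] U_op_sorted[OF ci j] U_op_sorted[OF c j] only_j in auto)
    then show ?thesis
      using True by simp
  next
    case False
    then show ?thesis
      using r_nth nth_U_op[OF c j] k by simp
  qed
  have "\<omega> ?r i = \<omega> (U i c) i" "\<omega> ?r (Suc i) = \<omega> (U i c) (Suc i)"
    using label_perm_nth[OF r] label_perm_nth[OF ci] nth_U_op[OF ci j] i j far by auto
  then show "\<omega> ?r i \<le> \<omega> ?r (Suc i)"
    using U_op_sorted[OF c i] by simp
qed

lemma label_perm_U_op_braid:
  assumes c: "max_chain c" and i: "i \<in> {1..n-1}" "Suc i \<in> {1..n-1}"
    and descents: "\<omega> c (Suc (Suc i)) < \<omega> c (Suc i)" "\<omega> c (Suc i) < \<omega> c i"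
  shows "\<omega> (U i (U (Suc i) (U i c))) = \<omega> c \<circ> adj_swap i \<circ> adj_swap (Suc i) \<circ> adj_swap i"
    and "\<omega> (U (Suc i) (U i (U (Suc i) c))) = \<omega> c \<circ> adj_swap i \<circ> adj_swap (Suc i) \<circ> adj_swap i"
proof -
  let ?w = "\<omega> c"
  have c1: "max_chain (U i c)" "max_chain (U (Suc i) (U i c))"
    using max_chain_U_op c i by auto
  have "\<omega> (U i c) = ?w \<circ> adj_swap i"
    using label_perm_U_op[OF c i(1)] descents by simp
  moreover from this have "\<omega> (U (Suc i) (U i c)) = ?w \<circ> adj_swap i \<circ> adj_swap (Suc i)"
    using label_perm_U_op[OF c1(1) i(2)] descents by (simp add: Transposition.transpose_def)
  ultimately show "\<omega> (U i (U (Suc i) (U i c))) =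
      ?w \<circ> adj_swap i \<circ> adj_swap (Suc i) \<circ> adj_swap i"
    using label_perm_U_op[OF c1(2) i(1)] descents by (simp add: Transposition.transpose_def)
  have c2: "max_chain (U (Suc i) c)" "max_chain (U i (U (Suc i) c))"
    using max_chain_U_op c i by auto
  have "\<omega> (U (Suc i) c) = ?w \<circ> adj_swap (Suc i)"
    using label_perm_U_op[OF c i(2)] descents by simp
  moreover from this have "\<omega> (U i (U (Suc i) c)) = ?w \<circ> adj_swap (Suc i) \<circ> adj_swap i"
    using label_perm_U_op[OF c2(1) i(1)] descents by (simp add: Transposition.transpose_def)
  ultimately have "\<omega> (U (Suc i) (U i (U (Suc i) c))) =
      ?w \<circ> adj_swap (Suc i) \<circ> adj_swap i \<circ> adj_swap (Suc i)"
    using label_perm_U_op[OF c2(2) i(2)] descents by (simp add: Transposition.transpose_def)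
  \<comment> \<open>the braid relation s_i s_(i+1) s_i = s_(i+1) s_i s_(i+1)\<close>
  then show "\<omega> (U (Suc i) (U i (U (Suc i) c))) = ?w \<circ> adj_swap i \<circ> adj_swap (Suc i) \<circ> adj_swap i"
    by (auto simp: Transposition.transpose_def)
qed

lemma U_op_braid:
  assumes c: "max_chain c" and i: "i \<in> {1..n-1}" "Suc i \<in> {1..n-1}"
    and descents: "\<omega> c (Suc (Suc i)) < \<omega> c (Suc i)" "\<omega> c (Suc i) < \<omega> c i"
  shows "U i (U (Suc i) (U i c)) = U (Suc i) (U i (U (Suc i) c))" (is "?r1 = ?r2")
proof -
  have c1: "max_chain (U i c)" "max_chain (U (Suc i) (U i c))"
    and c2: "max_chain (U (Suc i) c)" "max_chain (U i (U (Suc i) c))"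
    and r1: "max_chain ?r1" and r2: "max_chain ?r2"
    using max_chain_U_op c i by blast+
  have outside: "?r1 ! k = c ! k" "?r2 ! k = c ! k" if k: "k \<le> n" "k \<noteq> i" "k \<noteq> Suc i" for k
    using nth_U_op[OF c1(2) i(1) k(2,1)] nth_U_op[OF c1(1) i(2) k(3,1)] nth_U_op[OF c i(1) k(2,1)]
      nth_U_op[OF c2(2) i(2) k(3,1)] nth_U_op[OF c2(1) i(1) k(2,1)] nth_U_op[OF c i(2) k(3,1)]
    by simp_all
  let ?v = "\<omega> c \<circ> adj_swap i \<circ> adj_swap (Suc i) \<circ> adj_swap i"
  have v: "?v i = \<omega> c (Suc (Suc i))" "?v (Suc i) = \<omega> c (Suc i)" "?v (Suc (Suc i)) = \<omega> c i"
    by (simp_all add: Transposition.transpose_def)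
  have sorted: "\<omega> r k \<le> \<omega> r (Suc k)"
    if "\<omega> r = ?v" "i - 1 < k" "k < Suc (Suc i)" for r k
  proof -
    have "k = i \<or> k = Suc i"
      using that(2,3) i by auto
    then show ?thesis
      using that(1) v descents by auto
  qed
  note braid_perm = label_perm_U_op_braid[OF c i descents]
  have window: "?r1 ! k = ?r2 ! k" if "i - 1 \<le> k" "k \<le> Suc (Suc i)" for k
  proof (rule sorted_window_nth_eq[OF r1 r2, of "i - 1" "Suc (Suc i)"])
    show "i - 1 \<le> Suc (Suc i)" "Suc (Suc i) \<le> n"
      using i by auto
    show "?r1 ! (i - 1) = ?r2 ! (i - 1)" "?r1 ! Suc (Suc i) = ?r2 ! Suc (Suc i)"
      using outside i by auto
  qed (use that sorted[OF braid_perm(1)] sorted[OF braid_perm(2)] in auto)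
  show ?thesis
  proof (rule nth_equalityI)
    show "length ?r1 = length ?r2"
      using length_max_chain r1 r2 by simp
  next
    fix k assume "k < length ?r1"
    then have k: "k \<le> n"
      using length_max_chain[OF r1] by simp
    show "?r1 ! k = ?r2 ! k"
    proof (cases "k = i \<or> k = Suc i")
      case True
      then show ?thesis
        using window by auto
    next
      case False
      then show ?thesis
        using outside k by simp
    qed
  qed
qed

lemma M_set_confluent_less:
  assumes c: "max_chain c" and i: "i \<in> {1..n-1}" and j: "j \<in> {1..n-1}" and "i < j"
    and descent_i: "\<omega> c (Suc i) < \<omega> c i" and descent_j: "\<omega> c (Suc j) < \<omega> c j"
  obtains c' where "c' \<in> M (U i c)" "c' \<in> M (U j c)"
    "\<And>v. v permutes {1..n} \<Longrightarrow> weak_le n v (\<omega> (U i c)) \<Longrightarrow> weak_le n v (\<omega> (U j c)) \<Longrightarrow>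
      weak_le n v (\<omega> c')"
proof -
  let ?w = "\<omega> c"
  have w: "?w permutes {1..n}"
    using label_perm_permutes[OF c] .
  have INV_Ui: "INV n (\<omega> (U i c)) = INV n ?w - {(?w (Suc i), ?w i)}"
    using INV_U_op[OF c i descent_i] .
  have INV_Uj: "INV n (\<omega> (U j c)) = INV n ?w - {(?w (Suc j), ?w j)}"
    using INV_U_op[OF c j descent_j] .
  show ?thesis
  proof (cases "Suc i < j")
    case True
    let ?c' = "U j (U i c)"
    have ci: "max_chain (U i c)"
      using max_chain_U_op[OF c i] .
    have "\<omega> (U i c) = ?w \<circ> adj_swap i"
      using label_perm_U_op[OF c i descent_i] .
    then have "\<omega> (U i c) j = ?w j" "\<omega> (U i c) (Suc j) = ?w (Suc j)"
      using True by (auto simp: Transposition.transpose_def)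
    then have INV_c': "INV n (\<omega> ?c') = INV n (\<omega> (U i c)) - {(?w (Suc j), ?w j)}"
      using INV_U_op[OF ci j] descent_j by simp
    show ?thesis
    proof (rule that)
      show "?c' \<in> M (U i c)"
        using U_op_in_M_set[OF j] .
      show "?c' \<in> M (U j c)"
        using U_op_commute[OF c i j True] U_op_in_M_set[OF i] by metis
      show "weak_le n v (\<omega> ?c')"
        if "weak_le n v (\<omega> (U i c))" "weak_le n v (\<omega> (U j c))" for v
        using that INV_c' INV_Ui INV_Uj by (auto simp: weak_le_def)
    qed
  next
    case False
    then have j_eq: "j = Suc i"
      using \<open>i < j\<close> by simp
    let ?c' = "U i (U (Suc i) (U i c))"
    have descents: "?w (Suc (Suc i)) < ?w (Suc i)" "?w (Suc i) < ?w i"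
      using descent_i descent_j j_eq by auto
    have i': "Suc i \<in> {1..n-1}"
      using j j_eq by simp
    have INV_c': "INV n (\<omega> ?c') =
        INV n ?w - {(?w (Suc i), ?w i), (?w (Suc (Suc i)), ?w i), (?w (Suc (Suc i)), ?w (Suc i))}"
      using INV_comp_adj_swap_braid[OF w i i' descents] label_perm_U_op_braid(1)[OF c i i' descents]
      by simp
    show ?thesis
    proof (rule that)
      show "?c' \<in> M (U i c)"
        using M_set_trans[OF U_op_in_M_set[OF i'] U_op_in_M_set[OF i]]
          M_set_trans[OF U_op_in_M_set[OF i] U_op_in_M_set[OF i']] by blast
      show "?c' \<in> M (U j c)"
        unfolding U_op_braid[OF c i i' descents] j_eq
        using M_set_trans[OF U_op_in_M_set[OF i] U_op_in_M_set[OF i']]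
          M_set_trans[OF U_op_in_M_set[OF i'] U_op_in_M_set[OF i]] by blast
      fix v assume v: "v permutes {1..n}" "weak_le n v (\<omega> (U i c))" "weak_le n v (\<omega> (U j c))"
      have not_inv: "(?w (Suc (Suc i)), ?w (Suc i)) \<notin> INV n v" "(?w (Suc i), ?w i) \<notin> INV n v"
        using v INV_Ui INV_Uj j_eq by (auto simp: weak_le_def)
      moreover have "Suc (Suc i) \<in> {1..n}" "Suc i \<in> {1..n}" "i \<in> {1..n}"
        using i i' by auto
      then have "(?w (Suc (Suc i)), ?w i) \<notin> INV n v"
        using not_in_INV_trans[OF v(1) _ _ _ descents not_inv] permutes_in_image[OF w] by blast
      ultimately show "weak_le n v (\<omega> ?c')"
        using v INV_c' INV_Ui by (auto simp: weak_le_def)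
    qed
  qed
qed

lemma M_set_confluent:
  assumes c: "max_chain c" and i: "i \<in> {1..n-1}" and j: "j \<in> {1..n-1}" and "i \<noteq> j"
    and descent_i: "\<omega> c (Suc i) < \<omega> c i" and descent_j: "\<omega> c (Suc j) < \<omega> c j"
  obtains c' where "c' \<in> M (U i c)" "c' \<in> M (U j c)"
    "\<And>v. v permutes {1..n} \<Longrightarrow> weak_le n v (\<omega> (U i c)) \<Longrightarrow> weak_le n v (\<omega> (U j c)) \<Longrightarrow>
      weak_le n v (\<omega> c')"
proof (cases "i < j")
  case True
  then show ?thesis
    by (rule M_set_confluent_less[OF c i j _ descent_i descent_j]) (rule that)
next
  case False
  then have "j < i"
    using \<open>i \<noteq> j\<close> by simp
  then show ?thesis
  proof (rule M_set_confluent_less[OF c j i _ descent_j descent_i])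
    fix c' assume "c' \<in> M (U j c)" "c' \<in> M (U i c)"
      and below: "\<And>v. v permutes {1..n} \<Longrightarrow> weak_le n v (\<omega> (U j c)) \<Longrightarrow>
        weak_le n v (\<omega> (U i c)) \<Longrightarrow> weak_le n v (\<omega> c')"
    then show thesis
      by (intro that[of c']) (simp_all add: below)
  qed
qed

lemma label_perm_M_set_inject:
  "max_chain m \<Longrightarrow> c1 \<in> M m \<Longrightarrow> c2 \<in> M m \<Longrightarrow> \<omega> c1 = \<omega> c2 \<Longrightarrow> c1 = c2"
proof (induction "card (INV n (\<omega> m))" arbitrary: m c1 c2 rule: less_induct)
  case less
  note m = less.prems(1)
  have IH: "c1 = c2"
    if i: "i \<in> {1..n-1}" "\<omega> m (Suc i) < \<omega> m i"
      and "c1 \<in> M (U i m)" "c2 \<in> M (U i m)" "\<omega> c1 = \<omega> c2" for i c1 c2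
    using less.hyps[OF _ max_chain_U_op[OF m i(1)] that(3-5)] INV_U_op[OF m i]
      card_Diff1_less[OF finite_INV descent_in_INV[OF i]] by simp
  have moved: "\<omega> c \<noteq> \<omega> m"
    if i: "i \<in> {1..n-1}" "\<omega> m (Suc i) < \<omega> m i" and "c \<in> M (U i m)" for i c
    using M_set_weak_le[OF max_chain_U_op[OF m i(1)] that(3)] INV_U_op[OF m i] descent_in_INV[OF i]
    by (auto simp: weak_le_def)
  have stays: "c = m" if "c \<in> M m" "\<omega> c = \<omega> m" for c
    using M_set_cases[OF m that(1)] moved that(2) by blast
  show ?case
  proof (cases "c1 = m \<or> c2 = m")
    case True
    then show ?thesis
      using stays[of c1] stays[of c2] less.prems(2-4) by auto
  next
    case False
    then obtain i j where i: "i \<in> {1..n-1}" "\<omega> m (Suc i) < \<omega> m i" and c1: "c1 \<in> M (U i m)"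
      and j: "j \<in> {1..n-1}" "\<omega> m (Suc j) < \<omega> m j" and c2: "c2 \<in> M (U j m)"
      using M_set_cases[OF m less.prems(2)] M_set_cases[OF m less.prems(3)] by blast
    show ?thesis
    proof (cases "i = j")
      case True
      then show ?thesis
        using IH[OF i c1] c2 less.prems(4) by simp
    next
      case False
      obtain c' where c': "c' \<in> M (U i m)" "c' \<in> M (U j m)"
        and below_c': "\<And>v. v permutes {1..n} \<Longrightarrow> weak_le n v (\<omega> (U i m)) \<Longrightarrow>
          weak_le n v (\<omega> (U j m)) \<Longrightarrow> weak_le n v (\<omega> c')"
        by (rule M_set_confluent[OF m i(1) j(1) False i(2) j(2)]) (rule that)
      have c1_chain: "max_chain c1"
        using M_set_weak_le[OF max_chain_U_op[OF m i(1)] c1] by blast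
      have "weak_le n (\<omega> c1) (\<omega> c')"
        using below_c' label_perm_permutes[OF c1_chain] less.prems(4)
          M_set_weak_le[OF max_chain_U_op[OF m i(1)] c1] M_set_weak_le[OF max_chain_U_op[OF m j(1)] c2]
        by simp
      then obtain d where d: "d \<in> M c'" "\<omega> d = \<omega> c1"
        using ex_M_set_label_perm M_set_weak_le[OF max_chain_U_op[OF m i(1)] c'(1)]
          label_perm_permutes[OF c1_chain] by blast
      have "c1 = d"
        using IH[OF i c1 M_set_trans[OF c'(1) d(1)]] d(2) by simp
      moreover have "c2 = d"
        using IH[OF j c2 M_set_trans[OF c'(2) d(1)]] d(2) less.prems(4) by simp
      ultimately show ?thesis
        by simp
    qed
  qed
qed

end

theorem mainTheorem6:
  fixes lam :: "'a::{finite, lattice} \<Rightarrow> 'a \<Rightarrow> nat" and n :: nat and m :: "'a list"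
  assumes "graded_rank TYPE('a) n"
    and "Sn_EL_labeling n lam"
    and "max_chain m"
  shows "inj_on (label_perm n lam) (M_set n lam m)
    \<and> label_perm n lam ` M_set n lam m = {v. v permutes {1..n} \<and> weak_le n v (label_perm n lam m)}
    \<and> (\<forall>v. v permutes {1..n} \<and> weak_le n v (label_perm n lam m)
           \<longrightarrow> (\<exists>!m'. m' \<in> M_set n lam m \<and> label_perm n lam m' = v))"
proof -
  interpret graded_Sn_EL n lam
    using assms(1,2) by unfold_locales
  have inj: "inj_on \<omega> (M m)"
    using label_perm_M_set_inject[OF assms(3)] by (intro inj_onI)
  have image: "\<omega> ` M m = {v. v permutes {1..n} \<and> weak_le n v (\<omega> m)}"
    using label_perm_image_M_set[OF assms(3)] .
  have unique: "\<exists>!m'. m' \<in> M m \<and> \<omega> m' = v"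
    if v: "v permutes {1..n} \<and> weak_le n v (\<omega> m)" for v
  proof -
    obtain m' where "m' \<in> M m" "\<omega> m' = v"
      using ex_M_set_label_perm[OF assms(3)] v by blast
    then show ?thesis
      using inj_onD[OF inj] by (intro ex1I[of _ m']) auto
  qed
  show ?thesis
    using unique by (intro conjI inj image allI impI)
qed

end
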